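(* The relation on $\mathbb C^d_\Delta$ defined by $z\sim_N w$ if and only if $N\big(\overline{Az}\big)\cap\overline{Aw}\neq\emptyset$ (closures taken in $\mathbb C^d_\Delta$) is an equivalence relation.
   Context: Let $\mathfrak d$ be an $n$-dimensional real vector space, $\mathfrak d^*$ its dual and $\mathfrak d_{\mathbb C}=\mathfrak d\oplus i\mathfrak d$. A quasilattice in $\mathfrak d$ is the $\mathbb Z$-submodule generated by a finite set of vectors spanning $\mathfrak d$. Let $\Delta\subset\mathfrak d^*$ be an $n$-dimensional convex polytope (not necessarily rational or simple) with $d$ facets, written as $\Delta=\bigcap_{j=1}^d\{\mu\in\mathfrak d^*:\langle\mu,X_j\rangle\ge\lambda_j\}$, where $X_1,\dots,X_d\in\mathfrak d$ are chosen inward-pointing normals to the facets and $\lambda_j\in\mathbb R$; let $Q\subset\mathfrak d$ be a quasilattice containing $X_1,\dots,X_d$. For each face $F$ let $I_F\subseteq\{1,\dots,d\}$ be such that $F=\{\mu\in\Delta:\langle\mu,X_j\rangle=\lambda_j\iff j\in I_F\}$. Write $\mathbb C^F\times(\mathbb C^* )^{F^c}=\{z\in\mathbb C^d:z_j\ne0 \text{ for all } j\notin I_F\}$ and $\mathbb C^d_\Delta=\bigcup_F\mathbb C^F\times(\mathbb C^* )^{F^c}$ (union over all faces). Let $\pi:\mathbb R^d\to\mathfrak d$ with $e_j\mapsto X_j$, $\mathfrak n=\ker\pi$. $T^d=\mathbb R^d/\mathbb Z^d$ with projection $\exp$, acting on $\mathbb C^d$ by $\exp(Z)\cdot z=(e^{2\pi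 iZ_j}z_j)_j$ (extended to $\mathbb C^d/\mathbb Z^d$ for complex $Z$). $N=\ker(T^d\to\mathfrak d/Q)$ (induced by $\pi$) and $A=\{\exp(iY):Y\in\mathfrak n\}$, acting by $z_j\mapsto e^{-2\pi Y_j}z_j$. *)

theory Defs
  imports "HOL-Analysis.Analysis"
begin

text \<open>The dual space d* is identified with d (a Euclidean space) via the inner product,
  so the pairing <mu, X> is written mu \<bullet> X. Indices 1..d are a finite type 'd,
  C^d is complex^'d and R^d is real^'d.\<close>

definition int_span :: "'a::real_vector set \<Rightarrow> 'a set" where
  "int_span S = {v. \<exists>k :: 'a \<Rightarrow> int. \<exists>T. finite T \<and> T \<subseteq> S \<and> v = (\<Sum>s\<in>T. of_int (k s) *\<^sub>R s)}"

definition quasilattice :: "'a::euclidean_space set \<Rightarrow> bool" where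
  "quasilattice Q \<longleftrightarrow> (\<exists>S. finite S \<and> span S = UNIV \<and> Q = int_span S)"

definition piX :: "('d::finite \<Rightarrow> 'a::real_vector) \<Rightarrow> real^'d \<Rightarrow> 'a" where
  "piX X Z = (\<Sum>j\<in>UNIV. (Z $ j) *\<^sub>R X j)"

definition face_index :: "('d::finite \<Rightarrow> 'a::euclidean_space) \<Rightarrow> ('d \<Rightarrow> real) \<Rightarrow> 'a set \<Rightarrow> 'd set" where
  "face_index X lam F = {j. \<forall>\<mu>\<in>F. \<mu> \<bullet> X j = lam j}"

definition CdDelta :: "'a::euclidean_space set \<Rightarrow> ('d::finite \<Rightarrow> 'a) \<Rightarrow> ('d \<Rightarrow> real) \<Rightarrow> (complex^'d) set" where
  "CdDelta \<Delta> X lam = (\<Union>F\<in>{F. F face_of \<Delta> \<and> F \<noteq> {}}.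
      {z. \<forall>j. j \<notin> face_index X lam F \<longrightarrow> z $ j \<noteq> 0})"

text \<open>Action of exp(Z) \<in> T^d, Z \<in> R^d.\<close>
definition torus_act :: "real^'d::finite \<Rightarrow> complex^'d \<Rightarrow> complex^'d" where
  "torus_act Z z = (\<chi> j. exp (2 * pi * \<i> * complex_of_real (Z $ j)) * z $ j)"

text \<open>Action of exp(iY) \<in> A, Y \<in> n = ker pi: z_j \<mapsto> e^{-2 pi Y_j} z_j.\<close>
definition A_act :: "real^'d::finite \<Rightarrow> complex^'d \<Rightarrow> complex^'d" where
  "A_act Y z = (\<chi> j. complex_of_real (exp (- 2 * pi * (Y $ j))) * z $ j)"

definition A_orbit :: "('d::finite \<Rightarrow> 'a::real_vector) \<Rightarrow> complex^'d \<Rightarrow> (complex^'d) set" where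
  "A_orbit X z = {A_act Y z | Y. piX X Y = 0}"

text \<open>N = ker(T^d \<rightarrow> d/Q) = {exp Z | pi Z \<in> Q}; image N S of a set S.\<close>
definition N_image :: "('d::finite \<Rightarrow> 'a::real_vector) \<Rightarrow> 'a set \<Rightarrow> (complex^'d) set \<Rightarrow> (complex^'d) set" where
  "N_image X Q S = {torus_act Z w | Z w. piX X Z \<in> Q \<and> w \<in> S}"

definition rel_closure :: "'b::topological_space set \<Rightarrow> 'b set \<Rightarrow> 'b set" where
  "rel_closure U S = closure S \<inter> U"

definition simN :: "'a::euclidean_space set \<Rightarrow> ('d::finite \<Rightarrow> 'a) \<Rightarrow> ('d \<Rightarrow> real) \<Rightarrow> 'a set
    \<Rightarrow> complex^'d \<Rightarrow> complex^'d \<Rightarrow> bool" where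
  "simN \<Delta> X lam Q z w \<longleftrightarrow>
     N_image X Q (rel_closure (CdDelta \<Delta> X lam) (A_orbit X z))
       \<inter> rel_closure (CdDelta \<Delta> X lam) (A_orbit X w) \<noteq> {}"

end

theory Submission
  imports Defs
begin

(* Reflexivity and symmetry only use that N is a group (Q is closed under negation and
   contains 0), together with the fact that the torus acts by homeomorphisms commuting
   with A.  Call x "balanced" if
   |x_j|^2 = <mu, X_j> - lambda_j for some mu, i.e. x lies over the moment-map level set.
   We prove, in the spirit of the Kempf--Ness theorem, that
     (1) every A-orbit closure of a point of C^d_Delta contains a balanced point: it is a
         limit along a minimising sequence of the coercive potential
         Y |-> sum_j |exp(iY) p|_j^2 - 4 pi <lambda, Y> on ker pi, and first-order
         optimality along ker pi is exactly the balance condition;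
     (2) an A-orbit closure contains at most one balanced point: comparing the growth
         rates of the coordinates along two approximating sequences yields a sum that is
         positive yet vanishes because ker pi is orthogonal to the image of pi^T;
     (3) balanced points lie in C^d_Delta.
   If z ~ w ~ y, the balanced points of the relevant orbit closures inside closure(A w)
   therefore coincide, and composing the two torus elements shows z ~ y. *)

lemma piX_add: "piX X (a + b) = piX X a + piX X b"
  by (simp add: piX_def scaleR_add_left sum.distrib)

lemma piX_uminus: "piX X (- a) = - piX X a"
  by (simp add: piX_def sum_negf)

lemma piX_diff: "piX X (a - b) = piX X a - piX X b"
  using piX_add[of X a "- b"] by (simp add: piX_uminus)

lemma piX_zero: "piX X 0 = 0"
  by (simp add: piX_def)

lemma piX_scale: "piX X (t *\<^sub>R a) = t *\<^sub>R piX X a"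
  by (simp add: piX_def scaleR_sum_right)

lemma inner_piX: "\<mu> \<bullet> piX X Y = (\<Sum>j\<in>UNIV. (\<mu> \<bullet> X j) * Y $ j)"
  by (simp add: piX_def inner_sum_right mult.commute)

lemma int_span_zero: "0 \<in> int_span S"
  unfolding int_span_def by (rule CollectI, rule exI[of _ "\<lambda>_. 0"], rule exI[of _ "{}"]) simp

lemma int_span_uminus:
  assumes "v \<in> int_span S"
  shows "- v \<in> int_span S"
proof -
  obtain k T where T: "finite T" "T \<subseteq> S" "v = (\<Sum>s\<in>T. of_int (k s) *\<^sub>R s)"
    using assms unfolding int_span_def by blast
  show ?thesis unfolding int_span_def
    by (rule CollectI, rule exI[of _ "\<lambda>s. - k s"], rule exI[of _ T]) (simp add: T sum_negf)
qed

lemma int_span_add: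
  assumes "v \<in> int_span S" "u \<in> int_span S"
  shows "v + u \<in> int_span S"
proof -
  obtain k T where T: "finite T" "T \<subseteq> S" "v = (\<Sum>s\<in>T. of_int (k s) *\<^sub>R s)"
    using assms unfolding int_span_def by blast
  obtain k' T' where T': "finite T'" "T' \<subseteq> S" "u = (\<Sum>s\<in>T'. of_int (k' s) *\<^sub>R s)"
    using assms unfolding int_span_def by blast
  define ext where "ext K A s = (if s \<in> A then K s else 0)" for K :: "'a \<Rightarrow> int" and A s
  have extend: "(\<Sum>s\<in>A. of_int (K s) *\<^sub>R s) = (\<Sum>s\<in>T \<union> T'. of_int (ext K A s) *\<^sub>R s)"
    if "A \<subseteq> T \<union> T'" for K A
    using that T(1) T'(1) by (intro sum.mono_neutral_cong_left) (auto simp: ext_def)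
  have "v + u = (\<Sum>s\<in>T \<union> T'. of_int (ext k T s + ext k' T' s) *\<^sub>R s)"
    using T(3) T'(3) extend[of T k] extend[of T' k']
    by (simp add: scaleR_add_left sum.distrib)
  then show ?thesis
    unfolding int_span_def using T(1,2) T'(1,2)
    by (intro CollectI exI[of _ "\<lambda>s. ext k T s + ext k' T' s"] exI[of _ "T \<union> T'"]) simp
qed

lemma quasilattice_zero: "quasilattice Q \<Longrightarrow> 0 \<in> Q"
  by (auto simp: quasilattice_def int_span_zero)

lemma quasilattice_uminus: "quasilattice Q \<Longrightarrow> v \<in> Q \<Longrightarrow> - v \<in> Q"
  by (auto simp: quasilattice_def int_span_uminus)

lemma quasilattice_add: "quasilattice Q \<Longrightarrow> v \<in> Q \<Longrightarrow> u \<in> Q \<Longrightarrow> v + u \<in> Q"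
  by (auto simp: quasilattice_def int_span_add)

lemma torus_act_nth: "torus_act Z z $ j = exp (2 * pi * \<i> * complex_of_real (Z $ j)) * z $ j"
  by (simp add: torus_act_def)

lemma A_act_nth: "A_act Y z $ j = complex_of_real (exp (- 2 * pi * (Y $ j))) * z $ j"
  by (simp add: A_act_def)

lemma torus_act_zero: "torus_act 0 z = z"
  by (simp add: vec_eq_iff torus_act_nth)

lemma torus_act_add: "torus_act (Z + Z') z = torus_act Z (torus_act Z' z)"
  by (simp add: vec_eq_iff torus_act_nth exp_add[symmetric] algebra_simps)

lemma torus_act_inverse:
  "torus_act (- Z) (torus_act Z z) = z" "torus_act Z (torus_act (- Z) z) = z"
  using torus_act_add[of "- Z" Z z] torus_act_add[of Z "- Z" z] by (simp_all add: torus_act_zero)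

lemma A_act_zero: "A_act 0 z = z"
  by (simp add: vec_eq_iff A_act_nth)

lemma A_act_add: "A_act Y (A_act Y' z) = A_act (Y + Y') z"
  by (simp add: vec_eq_iff A_act_nth distrib_left exp_diff exp_minus field_simps flip: of_real_mult)

lemma torus_A_commute: "torus_act Z (A_act Y z) = A_act Y (torus_act Z z)"
  by (simp add: vec_eq_iff torus_act_nth A_act_nth)

text \<open>The torus preserves which coordinates vanish, hence preserves C^d_Delta.\<close>

lemma torus_CdDelta: "z \<in> CdDelta D X lam \<Longrightarrow> torus_act Z z \<in> CdDelta D X lam"
  unfolding CdDelta_def by (auto simp: torus_act_nth)

lemma continuous_torus_act: "continuous_on S (torus_act Z)"
  unfolding torus_act_def by (intro continuous_intros)

lemma continuous_A_act: "continuous_on S (A_act Y)"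
  unfolding A_act_def by (intro continuous_intros)

lemma A_act_cmod_sq: "cmod (A_act Y p $ j) ^ 2 = exp (- 2 * pi * (Y $ j)) ^ 2 * cmod (p $ j) ^ 2"
  by (simp add: A_act_nth norm_mult power_mult_distrib)

lemma A_orbit_self: "z \<in> A_orbit X z"
  unfolding A_orbit_def by (auto intro!: exI[of _ 0] simp: A_act_zero piX_zero)

text \<open>Orbit closures are A-invariant, so the orbit closure of any of its points is contained in it.\<close>

lemma closure_A_orbit_mono:
  assumes "p \<in> closure (A_orbit X w)"
  shows "closure (A_orbit X p) \<subseteq> closure (A_orbit X w)"
proof (rule closure_minimal)
  show "A_orbit X p \<subseteq> closure (A_orbit X w)"
  proof
    fix q assume "q \<in> A_orbit X p"
    then obtain Y where q: "q = A_act Y p" "piX X Y = 0" by (auto simp: A_orbit_def)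
    have "A_act Y ` A_orbit X w \<subseteq> A_orbit X w"
      using q(2) unfolding A_orbit_def by (auto simp: A_act_add piX_add)
    then have "A_act Y ` closure (A_orbit X w) \<subseteq> closure (A_orbit X w)"
      using closure_subset by (intro image_closure_subset continuous_A_act) auto
    then show "q \<in> closure (A_orbit X w)" using assms q by auto
  qed
qed auto

text \<open>The torus maps orbit closures to orbit closures, since it commutes with A.\<close>

lemma torus_closure_A_orbit:
  "torus_act Z ` closure (A_orbit X p) \<subseteq> closure (A_orbit X (torus_act Z p))"
proof (rule image_closure_subset[OF continuous_torus_act])
  show "torus_act Z ` A_orbit X p \<subseteq> closure (A_orbit X (torus_act Z p))"
    using closure_subset by (fastforce simp: A_orbit_def torus_A_commute)
qed auto

lemma closure_A_orbit_sequence: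
  assumes "x \<in> closure (A_orbit X w)"
  obtains Y where "\<And>n. piX X (Y n) = 0"
    and "\<And>j. (\<lambda>n. complex_of_real (exp (- 2 * pi * (Y n $ j))) * w $ j) \<longlonglongrightarrow> x $ j"
proof -
  obtain q where q: "\<And>n. q n \<in> A_orbit X w" "q \<longlonglongrightarrow> x"
    using assms closure_sequential by blast
  then have "\<forall>n. \<exists>Y. piX X Y = 0 \<and> q n = A_act Y w" by (auto simp: A_orbit_def)
  then obtain Y where Y: "\<And>n. piX X (Y n) = 0" "\<And>n. q n = A_act (Y n) w" by metis
  show ?thesis
    by (rule that[OF Y(1)]) (use tendsto_vec_nth[OF q(2)] in \<open>simp add: Y(2) A_act_nth\<close>)
qed

section \<open>Balanced points\<close>

text \<open>A point is balanced if its squared moduli are of the form \<open><mu, X_j> - lambda_j\<close>, i.e. it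
  lies over a point mu of the level set of the moment map.\<close>

definition balanced :: "('d::finite \<Rightarrow> 'a::euclidean_space) \<Rightarrow> ('d \<Rightarrow> real) \<Rightarrow> complex^'d \<Rightarrow> bool" where
  "balanced X lam x \<longleftrightarrow> (\<exists>\<mu>. \<forall>j. cmod (x $ j) ^ 2 = \<mu> \<bullet> X j - lam j)"

text \<open>A balanced point lies in C^d_Delta: mu is in Delta, and the coordinates of x vanish only
  on facets through mu, so x lies in the stratum of the face cut out by those facets.\<close>

lemma balanced_CdDelta:
  assumes Delta_def: "\<Delta> = {\<mu>. \<forall>j. \<mu> \<bullet> X j \<ge> lam j}" and b: "balanced X lam x"
  shows "x \<in> CdDelta \<Delta> X lam"
proof -
  obtain \<mu> where mu: "\<And>j. cmod (x $ j) ^ 2 = \<mu> \<bullet> X j - lam j" using b by (auto simp: balanced_def)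
  have "lam j \<le> \<mu> \<bullet> X j" for j using mu[of j] zero_le_power2[of "cmod (x $ j)"] by linarith
  then have mu_Delta: "\<mu> \<in> \<Delta>" unfolding Delta_def by blast
  have cvx: "convex \<Delta>"
  proof -
    have "\<Delta> = (\<Inter>j. {\<mu>. X j \<bullet> \<mu> \<ge> lam j})" unfolding Delta_def by (auto simp: inner_commute)
    then show ?thesis by (simp add: convex_INT convex_halfspace_ge)
  qed
  have facet_face: "{\<mu>\<in>\<Delta>. \<mu> \<bullet> X j = lam j} face_of \<Delta>" for j
  proof -
    have "\<Delta> \<inter> {\<mu>. X j \<bullet> \<mu> = lam j} face_of \<Delta>"
      using cvx by (rule face_of_Int_supporting_hyperplane_ge) (auto simp: Delta_def inner_commute)
    then show ?thesis by (simp add: inner_commute Int_def)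
  qed
  define Z where "Z = {j. \<mu> \<bullet> X j = lam j}"
  define F where "F = \<Inter> (insert \<Delta> ((\<lambda>j. {\<mu>\<in>\<Delta>. \<mu> \<bullet> X j = lam j}) ` Z))"
  have F_face: "F face_of \<Delta>"
    unfolding F_def using face_of_refl[OF cvx] facet_face by (intro face_of_Inter) auto
  have mu_F: "\<mu> \<in> F" using mu_Delta by (auto simp: F_def Z_def)
  have "x $ j \<noteq> 0" if "j \<notin> face_index X lam F" for j
  proof
    assume "x $ j = 0"
    then have "j \<in> Z" using mu[of j] by (simp add: Z_def)
    then have "j \<in> face_index X lam F" by (auto simp: face_index_def F_def)
    then show False using that by simp
  qed
  then show ?thesis unfolding CdDelta_def using F_face mu_F by blast
qed

section \<open>Uniqueness of balanced points in an orbit closure\<close>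

lemma ray_limit:
  fixes y :: "nat \<Rightarrow> real" and w c :: complex
  assumes lim: "(\<lambda>n. complex_of_real (exp (y n)) * w) \<longlonglongrightarrow> c"
  shows "c = complex_of_real (cmod c / cmod w) * w"
proof (cases "w = 0")
  case True
  then have "(\<lambda>n. 0) \<longlonglongrightarrow> c" using lim by simp
  then have "c = 0" using LIMSEQ_unique tendsto_const by blast
  then show ?thesis by simp
next
  case False
  have "(\<lambda>n. exp (y n) * cmod w) \<longlonglongrightarrow> cmod c"
    using tendsto_norm[OF lim] by (simp add: norm_mult)
  then have "(\<lambda>n. exp (y n) * cmod w / cmod w) \<longlonglongrightarrow> cmod c / cmod w"
    by (intro tendsto_divide) (use False in auto)
  then have "(\<lambda>n. exp (y n)) \<longlonglongrightarrow> cmod c / cmod w" using False by simp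
  then have "(\<lambda>n. complex_of_real (exp (y n)) * w) \<longlonglongrightarrow> complex_of_real (cmod c / cmod w) * w"
    by (intro tendsto_intros)
  then show ?thesis using lim LIMSEQ_unique by blast
qed

lemma ray_limit_order:
  fixes y y' :: "nat \<Rightarrow> real" and w c c' :: complex
  assumes lim: "(\<lambda>n. complex_of_real (exp (- 2 * pi * y n)) * w) \<longlonglongrightarrow> c"
    and lim': "(\<lambda>n. complex_of_real (exp (- 2 * pi * y' n)) * w) \<longlonglongrightarrow> c'"
    and less: "cmod c' < cmod c"
  shows "eventually (\<lambda>n. y n < y' n) sequentially"
proof -
  have "(\<lambda>n. exp (- 2 * pi * y n) * cmod w - exp (- 2 * pi * y' n) * cmod w)
          \<longlonglongrightarrow> cmod c - cmod c'"
    using tendsto_diff[OF tendsto_norm[OF lim] tendsto_norm[OF lim']] by (simp add: norm_mult)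
  then have "eventually (\<lambda>n. 0 < exp (- 2 * pi * y n) * cmod w - exp (- 2 * pi * y' n) * cmod w)
      sequentially"
    by (rule order_tendstoD(1)) (use less in simp)
  then show ?thesis
  proof eventually_elim
    case (elim n)
    then have "exp (- 2 * pi * y' n) * cmod w < exp (- 2 * pi * y n) * cmod w" by simp
    then have "exp (- 2 * pi * y' n) < exp (- 2 * pi * y n)"
      by (rule mult_right_less_imp_less) simp
    then show ?case by simp
  qed
qed

text \<open>Along approximating sequences
  \<open>exp(iY_n) w \<rightarrow> x\<close> and \<open>exp(iY'_n) w \<rightarrow> x'\<close> the sum
  \<open>sum_j (|x_j|^2 - |x'_j|^2)(Y'_n - Y_n)_j = <mu - mu', pi(Y'_n - Y_n)>\<close> vanishes, while each
  summand is eventually nonnegative, and eventually positive wherever the moduli differ.\<close>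

lemma balanced_limits_same_moduli:
  assumes Y: "\<And>n. piX X (Y n) = 0" and Y': "\<And>n. piX X (Y' n) = 0"
    and lim: "\<And>j. (\<lambda>n. complex_of_real (exp (- 2 * pi * (Y n $ j))) * w $ j) \<longlonglongrightarrow> x $ j"
    and lim': "\<And>j. (\<lambda>n. complex_of_real (exp (- 2 * pi * (Y' n $ j))) * w $ j) \<longlonglongrightarrow> x' $ j"
    and bx: "balanced X lam x" and bx': "balanced X lam x'"
  shows "cmod (x $ j) = cmod (x' $ j)"
proof -
  obtain \<mu> where mu: "\<And>j. cmod (x $ j) ^ 2 = \<mu> \<bullet> X j - lam j" using bx by (auto simp: balanced_def)
  obtain \<mu>' where mu': "\<And>j. cmod (x' $ j) ^ 2 = \<mu>' \<bullet> X j - lam j" using bx' by (auto simp: balanced_def)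
  define D where "D n j = (cmod (x $ j) ^ 2 - cmod (x' $ j) ^ 2) * (Y' n $ j - Y n $ j)" for n j
  have sum_D: "(\<Sum>j\<in>UNIV. D n j) = 0" for n
  proof -
    have "(\<Sum>j\<in>UNIV. D n j) = (\<mu> - \<mu>') \<bullet> piX X (Y' n - Y n)"
      by (simp add: D_def mu mu' inner_diff_left inner_piX)
    then show ?thesis by (simp add: piX_diff Y Y')
  qed
  have D_pos: "eventually (\<lambda>n. D n j > 0) sequentially" if "cmod (x $ j) \<noteq> cmod (x' $ j)" for j
  proof (cases "cmod (x' $ j) < cmod (x $ j)")
    case True
    have sq: "cmod (x' $ j) ^ 2 < cmod (x $ j) ^ 2" using True by (simp add: power_strict_mono)
    show ?thesis using ray_limit_order[OF lim lim' True]
      by (rule eventually_mono) (use sq in \<open>simp add: D_def\<close>)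
  next
    case False
    then have less: "cmod (x $ j) < cmod (x' $ j)" using that by linarith
    then have sq: "cmod (x $ j) ^ 2 < cmod (x' $ j) ^ 2" by (simp add: power_strict_mono)
    show ?thesis using ray_limit_order[OF lim' lim less]
      by (rule eventually_mono) (use sq in \<open>simp add: D_def mult_neg_neg\<close>)
  qed
  have D_nonneg: "eventually (\<lambda>n. \<forall>i. D n i \<ge> 0) sequentially"
  proof (rule eventually_all_finite)
    fix i
    show "eventually (\<lambda>n. D n i \<ge> 0) sequentially"
      using D_pos[of i] by (cases "cmod (x $ i) = cmod (x' $ i)") (auto simp: D_def elim: eventually_mono)
  qed
  show ?thesis
  proof (rule ccontr)
    assume differ: "cmod (x $ j) \<noteq> cmod (x' $ j)"
    have "eventually (\<lambda>n. False) sequentially"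
      using D_pos[OF differ] D_nonneg
    proof eventually_elim
      case (elim n)
      have "0 < (\<Sum>i\<in>UNIV. D n i)" by (rule sum_pos2[of UNIV j]) (use elim in auto)
      then show ?case using sum_D[of n] by simp
    qed
    then show False by simp
  qed
qed

text \<open>Uniqueness: two balanced points of an orbit closure have equal moduli, and points on the
  same coordinate rays with equal moduli coincide.\<close>

lemma balanced_unique:
  assumes x: "x \<in> closure (A_orbit X w)" and x': "x' \<in> closure (A_orbit X w)"
    and bx: "balanced X lam x" and bx': "balanced X lam x'"
  shows "x = x'"
proof -
  obtain Y where Y: "\<And>n. piX X (Y n) = 0"
    and lim: "\<And>j. (\<lambda>n. complex_of_real (exp (- 2 * pi * (Y n $ j))) * w $ j) \<longlonglongrightarrow> x $ j"
    using closure_A_orbit_sequence[OF x] by blast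
  obtain Y' where Y': "\<And>n. piX X (Y' n) = 0"
    and lim': "\<And>j. (\<lambda>n. complex_of_real (exp (- 2 * pi * (Y' n $ j))) * w $ j) \<longlonglongrightarrow> x' $ j"
    using closure_A_orbit_sequence[OF x'] by blast
  show ?thesis
    using ray_limit[OF lim] ray_limit[OF lim'] balanced_limits_same_moduli[OF Y Y' lim lim' bx bx']
    by (metis vec_eq_iff)
qed

section \<open>Existence of a balanced point in an orbit closure\<close>

text \<open>The linear-algebra fact behind the first-order condition: a vector orthogonal to ker pi
  lies in the image of the transpose of pi, i.e. has the form \<open>(<mu, X_j>)_j\<close>.\<close>

lemma orthogonal_kernel_in_transpose_image:
  fixes X :: "'d::finite \<Rightarrow> 'a::euclidean_space" and a :: "real^'d"
  assumes orth: "\<And>v. piX X v = 0 \<Longrightarrow> (\<Sum>j\<in>UNIV. a $ j * v $ j) = 0"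
  shows "\<exists>\<mu>. \<forall>j. a $ j = \<mu> \<bullet> X j"
proof -
  define L where "L = (\<lambda>\<mu>::'a. (\<chi> j. \<mu> \<bullet> X j) :: real^'d)"
  have lin: "linear L" unfolding L_def
    by (rule linearI) (simp_all add: vec_eq_iff inner_add_left)
  have sub: "subspace (range L)" using linear_subspace_image[OF lin subspace_UNIV] by simp
  obtain y z where y: "y \<in> span (range L)" and z: "\<And>w. w \<in> span (range L) \<Longrightarrow> orthogonal z w"
    and a: "a = y + z"
    using orthogonal_subspace_decomp_exists[of "range L" a] by blast
  text \<open>The component z orthogonal to the image of L lies in ker pi, so it is orthogonal to a.\<close>
  have "z \<bullet> L \<mu> = \<mu> \<bullet> piX X z" for \<mu>
    by (simp add: L_def inner_vec_def inner_piX mult.commute)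
  moreover have "z \<bullet> L (piX X z) = 0"
    using z[of "L (piX X z)"] span_base[of "L (piX X z)" "range L"] by (auto simp: orthogonal_def)
  ultimately have "piX X z = 0" by simp
  then have "a \<bullet> z = 0" using orth[OF \<open>piX X z = 0\<close>] by (simp add: inner_vec_def)
  moreover have "y \<bullet> z = 0" using z[OF y] by (simp add: orthogonal_def inner_commute)
  ultimately have "z = 0" using a by (simp add: inner_add_left)
  then have "a \<in> range L" using a y span_eq_iff[THEN iffD2, OF sub] by simp
  then show ?thesis by (auto simp: L_def)
qed

text \<open>The potential on the A-orbit of p, parametrised by \<open>Y \<in> R^d\<close>.  On ker pi its critical
  points are exactly the balanced points of the orbit.\<close>

definition potential :: "('d::finite \<Rightarrow> real) \<Rightarrow> complex^'d \<Rightarrow> real^'d \<Rightarrow> real" where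
  "potential lam p Y = (\<Sum>j\<in>UNIV. cmod (A_act Y p $ j) ^ 2) - 4 * pi * (\<Sum>j\<in>UNIV. lam j * Y $ j)"

lemma potential_cocycle:
  "potential lam p (Y + Y') = potential lam (A_act Y p) Y' - 4 * pi * (\<Sum>j\<in>UNIV. lam j * Y $ j)"
proof -
  have orbit: "A_act Y' (A_act Y p) = A_act (Y + Y') p"
    using A_act_add[of Y' Y p] by (simp add: add.commute)
  have linear: "(\<Sum>j\<in>UNIV. lam j * (Y + Y') $ j) = (\<Sum>j\<in>UNIV. lam j * Y $ j) + (\<Sum>j\<in>UNIV. lam j * Y' $ j)"
    by (simp add: distrib_left sum.distrib)
  show ?thesis unfolding potential_def orbit linear by (simp add: algebra_simps)
qed

lemma potential_tendsto:
  assumes "f \<longlonglongrightarrow> l"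
  shows "(\<lambda>n. potential lam (f n) Y) \<longlonglongrightarrow> potential lam l Y"
  unfolding potential_def A_act_nth by (intro tendsto_intros tendsto_vec_nth assms)

text \<open>One-variable estimate behind coercivity: with \<open>r = e^(-4 pi y) rho\<close>, the inequality
  \<open>ln t \<le> t - 1\<close> at \<open>t = r / (2 s)\<close> bounds the linear term \<open>4 pi s y\<close> below by \<open>- r/2\<close> up to a constant.\<close>

lemma exp_linear_lower_bound:
  fixes rho s y :: real
  assumes rho: "rho \<ge> 0" and s: "s \<ge> 0" and sp: "s > 0 \<Longrightarrow> rho > 0"
  shows "exp (- 2 * pi * y) ^ 2 * rho + 4 * pi * s * y \<ge>
         exp (- 2 * pi * y) ^ 2 * rho / 2 + (if s = 0 then 0 else s * (ln rho - ln (2 * s) + 1))"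
proof (cases "s = 0")
  case True then show ?thesis using rho by simp
next
  case False
  then have s0: "s > 0" using s by simp
  then have r0: "rho > 0" using sp by simp
  define r where "r = exp (- 2 * pi * y) ^ 2 * rho"
  have rpos: "r > 0" using r0 by (simp add: r_def)
  have lnr: "ln r = - 4 * pi * y + ln rho"
    using r0 by (simp add: r_def ln_mult power2_eq_square flip: exp_add)
  have "ln (r / (2 * s)) \<le> r / (2 * s) - 1" using rpos s0 by (intro ln_le_minus_one) simp
  then have "ln r - ln (2 * s) \<le> r / (2 * s) - 1" using rpos s0 by (simp add: ln_div)
  then have "s * (ln r - ln (2 * s)) \<le> s * (r / (2 * s) - 1)" using s0 by (simp add: mult_left_mono)
  also have "s * (r / (2 * s) - 1) = r / 2 - s" using s0 by (simp add: field_simps)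
  finally have "r + 4 * pi * s * y \<ge> r / 2 + s * (ln rho - ln (2 * s) + 1)"
    using lnr by (simp add: algebra_simps)
  then show ?thesis using False by (simp add: r_def)
qed

text \<open>Choose mu in a face F with p in the stratum of F; then
  \<open>-<lambda, Y> = sum_j s_j Y_j\<close> with \<open>s_j = <mu, X_j> - lambda_j \<ge> 0\<close>, and \<open>s_j > 0\<close> forces \<open>p_j \<noteq> 0\<close>.
  Termwise application of the previous estimate bounds the potential below by half the squared
  norm of the orbit point plus a constant.\<close>

lemma potential_coercive:
  fixes X :: "'d::finite \<Rightarrow> 'a::euclidean_space"
  assumes Delta_def: "\<Delta> = {\<mu>. \<forall>j. \<mu> \<bullet> X j \<ge> lam j}" and p: "p \<in> CdDelta \<Delta> X lam"
  obtains K where "\<And>Y. piX X Y = 0 \<Longrightarrow> (\<Sum>j\<in>UNIV. cmod (A_act Y p $ j) ^ 2) / 2 + K \<le> potential lam p Y"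
proof -
  obtain F where F: "F face_of \<Delta>" "F \<noteq> {}" "\<And>j. j \<notin> face_index X lam F \<Longrightarrow> p $ j \<noteq> 0"
    using p unfolding CdDelta_def by blast
  obtain \<mu> where mu_F: "\<mu> \<in> F" using F by blast
  then have mu_Delta: "\<mu> \<in> \<Delta>" using face_of_imp_subset F by blast
  define s where "s j = \<mu> \<bullet> X j - lam j" for j
  have s_nonneg: "s j \<ge> 0" for j using mu_Delta Delta_def s_def by auto
  have p_nonzero: "cmod (p $ j) ^ 2 > 0" if "s j > 0" for j
  proof (rule ccontr)
    assume "\<not> cmod (p $ j) ^ 2 > 0"
    then have "j \<in> face_index X lam F" using F(3) by auto
    then have "\<mu> \<bullet> X j = lam j" using mu_F by (auto simp: face_index_def)
    then show False using that by (simp add: s_def)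
  qed
  define K where "K = (\<Sum>j\<in>UNIV. if s j = 0 then 0 else s j * (ln (cmod (p $ j) ^ 2) - ln (2 * s j) + 1))"
  have "(\<Sum>j\<in>UNIV. cmod (A_act Y p $ j) ^ 2) / 2 + K \<le> potential lam p Y" if Y: "piX X Y = 0" for Y
  proof -
    have "(\<Sum>j\<in>UNIV. s j * Y $ j) = \<mu> \<bullet> piX X Y - (\<Sum>j\<in>UNIV. lam j * Y $ j)"
      by (simp add: s_def inner_piX left_diff_distrib sum_subtractf)
    then have "potential lam p Y = (\<Sum>j\<in>UNIV. cmod (A_act Y p $ j) ^ 2 + 4 * pi * s j * Y $ j)"
      using Y by (simp add: potential_def sum.distrib sum_distrib_left[symmetric] mult.assoc)
    also have "\<dots> \<ge> (\<Sum>j\<in>UNIV. cmod (A_act Y p $ j) ^ 2 / 2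
                     + (if s j = 0 then 0 else s j * (ln (cmod (p $ j) ^ 2) - ln (2 * s j) + 1)))"
      by (intro sum_mono)
        (use exp_linear_lower_bound[OF _ s_nonneg p_nonzero] in \<open>auto simp: A_act_cmod_sq\<close>)
    finally show ?thesis by (simp add: K_def sum.distrib sum_divide_distrib)
  qed
  then show ?thesis using that by blast
qed

text \<open>A limit of a minimising sequence of the potential minimises its own potential on ker pi:
  by the cocycle identity the increments of the potential are continuous in the base point.\<close>

lemma minimising_limit_minimal:
  assumes min: "\<And>Y. piX X Y = 0 \<Longrightarrow> m \<le> potential lam p Y"
    and Ys: "\<And>n. piX X (Ys n) = 0" and pot: "(\<lambda>n. potential lam p (Ys n)) \<longlonglongrightarrow> m"
    and lim: "(\<lambda>n. A_act (Ys n) p) \<longlonglongrightarrow> l"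
    and V: "piX X V = 0"
  shows "potential lam l 0 \<le> potential lam l V"
proof -
  define inc where "inc x = potential lam x V - potential lam x 0" for x
  have inc_eq: "inc (A_act (Ys n) p) = potential lam p (Ys n + V) - potential lam p (Ys n)" for n
    using potential_cocycle[of lam p "Ys n" V] potential_cocycle[of lam p "Ys n" 0]
    by (simp add: inc_def)
  have "m - potential lam p (Ys n) \<le> inc (A_act (Ys n) p)" for n
    using min[of "Ys n + V"] by (simp add: inc_eq piX_add Ys V)
  moreover have "(\<lambda>n. inc (A_act (Ys n) p)) \<longlonglongrightarrow> inc l"
    unfolding inc_def by (intro tendsto_diff potential_tendsto lim)
  moreover have "(\<lambda>n. m - potential lam p (Ys n)) \<longlonglongrightarrow> m - m" by (intro tendsto_diff tendsto_const pot)
  ultimately have "0 \<le> inc l" by (intro tendsto_le[OF trivial_limit_sequentially]) auto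
  then show ?thesis by (simp add: inc_def)
qed

lemma potential_line_derivative:
  "((\<lambda>t. potential lam l (t *\<^sub>R v)) has_real_derivative
      - 4 * pi * (\<Sum>j\<in>UNIV. (cmod (l $ j) ^ 2 + lam j) * v $ j)) (at 0)"
proof -
  have along_line: "(\<lambda>t. potential lam l (t *\<^sub>R v)) = (\<lambda>t. (\<Sum>j\<in>UNIV. exp (- 2 * pi * (t * v $ j)) ^ 2 * cmod (l $ j) ^ 2)
             - 4 * pi * (\<Sum>j\<in>UNIV. lam j * (t * v $ j)))"
    by (simp add: potential_def A_act_cmod_sq)
  have deriv_value: "- 4 * pi * (\<Sum>j\<in>UNIV. (cmod (l $ j) ^ 2 + lam j) * v $ j)
      = (\<Sum>j\<in>UNIV. (- 4 * pi * v $ j) * cmod (l $ j) ^ 2) - 4 * pi * (\<Sum>j\<in>UNIV. lam j * v $ j)"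
    by (simp add: sum_distrib_left sum_subtractf[symmetric] algebra_simps) (rule sum.cong; simp)
  have exp_term: "((\<lambda>t. exp (- 2 * pi * (t * v $ j)) ^ 2 * c) has_real_derivative (- 4 * pi * v $ j) * c) (at 0)"
    for j c by (auto intro!: derivative_eq_intros simp: field_simps)
  have linear_part: "((\<lambda>t. \<Sum>j\<in>UNIV. lam j * (t * v $ j)) has_real_derivative (\<Sum>j\<in>UNIV. lam j * v $ j)) (at 0)"
    by (intro DERIV_sum) (auto intro!: derivative_eq_intros)
  show ?thesis
    unfolding along_line deriv_value by (intro DERIV_diff DERIV_sum DERIV_cmult exp_term linear_part)
qed

text \<open>First-order optimality: a point minimising its potential on ker pi is balanced, since the
  derivative along each kernel direction v is \<open>-4 pi sum_j (|l_j|^2 + lambda_j) v_j\<close>.\<close>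

lemma minimal_potential_balanced:
  fixes X :: "'d::finite \<Rightarrow> 'a::euclidean_space"
  assumes min: "\<And>V. piX X V = 0 \<Longrightarrow> potential lam l 0 \<le> potential lam l V"
  shows "balanced X lam l"
proof -
  have "(\<Sum>j\<in>UNIV. (cmod (l $ j) ^ 2 + lam j) * v $ j) = 0" if v: "piX X v = 0" for v
  proof -
    have "\<forall>t. \<bar>0 - t\<bar> < 1 \<longrightarrow> potential lam l (0 *\<^sub>R v) \<le> potential lam l (t *\<^sub>R v)"
      using min v by (simp add: piX_scale)
    then show ?thesis
      using DERIV_local_min[OF potential_line_derivative zero_less_one] by simp
  qed
  then obtain \<mu> where "\<forall>j. (\<chi> j. cmod (l $ j) ^ 2 + lam j) $ j = \<mu> \<bullet> X j"
    using orthogonal_kernel_in_transpose_image[of X "\<chi> j. cmod (l $ j) ^ 2 + lam j"] by auto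
  then show ?thesis by (auto simp: balanced_def algebra_simps)
qed

lemma minimising_sequence:
  fixes f :: "'b \<Rightarrow> real"
  assumes "S \<noteq> {}" and bdd: "bdd_below (f ` S)"
  obtains xs where "\<And>n. xs n \<in> S" and "(\<lambda>n. f (xs n)) \<longlonglongrightarrow> Inf (f ` S)"
proof -
  obtain u where u: "\<And>n. u n \<in> f ` S" "u \<longlonglongrightarrow> Inf (f ` S)"
    using closure_contains_Inf[OF _ bdd] assms(1) unfolding closure_sequential by blast
  have "\<forall>n. \<exists>x. x \<in> S \<and> u n = f x" using u(1) by blast
  then obtain xs where xs: "\<And>n. xs n \<in> S" and u_eq: "\<And>n. u n = f (xs n)" by metis
  have "u = (\<lambda>n. f (xs n))" using u_eq by (rule ext)
  with u(2) show ?thesis using that[OF xs] by simp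
qed

text \<open>Existence: a minimising sequence on ker pi gives orbit points of bounded norm (by
  coercivity), a convergent subsequence has its limit in the orbit closure, and that limit is
  balanced by minimising_limit_minimal and minimal_potential_balanced.\<close>

lemma exists_balanced:
  fixes X :: "'d::finite \<Rightarrow> 'a::euclidean_space"
  assumes Delta_def: "\<Delta> = {\<mu>. \<forall>j. \<mu> \<bullet> X j \<ge> lam j}" and p: "p \<in> CdDelta \<Delta> X lam"
  shows "\<exists>x \<in> closure (A_orbit X p). balanced X lam x"
proof -
  define N where "N = {Y. piX X Y = 0}"
  define m where "m = Inf (potential lam p ` N)"
  obtain K where K: "\<And>Y. piX X Y = 0 \<Longrightarrow> (\<Sum>j\<in>UNIV. cmod (A_act Y p $ j) ^ 2) / 2 + K \<le> potential lam p Y"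
    using potential_coercive[OF Delta_def p] by blast
  have bdd: "bdd_below (potential lam p ` N)"
  proof
    fix y assume "y \<in> potential lam p ` N"
    then obtain Y where Y: "piX X Y = 0" "y = potential lam p Y" by (auto simp: N_def)
    have "(\<Sum>j\<in>UNIV. cmod (A_act Y p $ j) ^ 2) \<ge> 0" by (intro sum_nonneg) simp
    then show "K \<le> y" using K[OF Y(1)] Y(2) by linarith
  qed
  have "N \<noteq> {}" using piX_zero by (auto simp: N_def)
  then obtain Ys where Ys: "\<And>n. Ys n \<in> N" and pot: "(\<lambda>n. potential lam p (Ys n)) \<longlonglongrightarrow> m"
    using minimising_sequence[OF _ bdd] unfolding m_def[symmetric] by blast
  have min: "m \<le> potential lam p Y" if "Y \<in> N" for Y
    using cInf_lower[OF _ bdd] that by (auto simp: m_def)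
  define xs where "xs n = A_act (Ys n) p" for n
  obtain B where B: "\<And>n. potential lam p (Ys n) \<le> B"
    using convergent_imp_bounded[OF pot] unfolding bounded_real by (auto simp: abs_le_iff)
  define R where "R = sqrt (2 * (B - K))"
  have xs_bounded: "xs n \<in> cball 0 R" for n
  proof -
    have "(\<Sum>j\<in>UNIV. cmod (xs n $ j) ^ 2) \<le> 2 * (B - K)"
      using K[of "Ys n"] Ys[of n] B[of n] by (simp add: xs_def N_def)
    then show ?thesis by (simp add: norm_vec_def L2_set_def R_def)
  qed
  obtain l r where r: "strict_mono (r :: nat \<Rightarrow> nat)" and lim: "(xs \<circ> r) \<longlonglongrightarrow> l"
    using seq_compactE[OF compact_imp_seq_compact[OF compact_cball], of xs 0 R] xs_bounded by blast
  have "l \<in> closure (A_orbit X p)"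
    unfolding closure_sequential
    by (rule exI[of _ "xs \<circ> r"]) (use lim Ys in \<open>auto simp: xs_def A_orbit_def N_def\<close>)
  moreover have "balanced X lam l"
  proof (rule minimal_potential_balanced, rule minimising_limit_minimal)
    show "\<And>Y. piX X Y = 0 \<Longrightarrow> m \<le> potential lam p Y" using min by (simp add: N_def)
    show "piX X (Ys (r n)) = 0" for n using Ys by (simp add: N_def)
    show "(\<lambda>n. potential lam p (Ys (r n))) \<longlonglongrightarrow> m"
      using LIMSEQ_subseq_LIMSEQ[OF pot r] by (simp add: comp_def)
    show "(\<lambda>n. A_act (Ys (r n)) p) \<longlonglongrightarrow> l" using lim by (simp add: comp_def xs_def)
  qed
  ultimately show ?thesis by blast
qed

section \<open>The relation is an equivalence relation\<close>

lemma simN_iff: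
  "simN \<Delta> X lam Q z w \<longleftrightarrow> (\<exists>Z u. piX X Z \<in> Q \<and> u \<in> closure (A_orbit X z) \<and> u \<in> CdDelta \<Delta> X lam
      \<and> torus_act Z u \<in> closure (A_orbit X w) \<and> torus_act Z u \<in> CdDelta \<Delta> X lam)"
  unfolding simN_def N_image_def rel_closure_def by blast

lemma simN_refl:
  assumes Q: "quasilattice Q" and z: "z \<in> CdDelta \<Delta> X lam"
  shows "simN \<Delta> X lam Q z z"
  unfolding simN_iff
  using z closure_subset A_orbit_self[of z X] quasilattice_zero[OF Q]
  by (intro exI[of _ 0] exI[of _ z]) (auto simp: piX_zero torus_act_zero)

text \<open>Symmetry: translate back by the inverse element of N.\<close>

lemma simN_sym:
  assumes Q: "quasilattice Q" and zw: "simN \<Delta> X lam Q z w"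
  shows "simN \<Delta> X lam Q w z"
proof -
  obtain Z u where "piX X Z \<in> Q" "u \<in> closure (A_orbit X z)" "u \<in> CdDelta \<Delta> X lam"
      "torus_act Z u \<in> closure (A_orbit X w)" "torus_act Z u \<in> CdDelta \<Delta> X lam"
    using zw unfolding simN_iff by blast
  then show ?thesis unfolding simN_iff using quasilattice_uminus[OF Q]
    by (intro exI[of _ "- Z"] exI[of _ "torus_act Z u"]) (simp add: piX_uminus torus_act_inverse)
qed

text \<open>Transitivity: if z ~ w via \<open>(Z1, u1)\<close> and w ~ y via \<open>(Z2, u2)\<close>, the balanced points of the
  orbit closures of \<open>exp(Z1) u1\<close> and of \<open>u2\<close> both lie in \<open>closure(A w)\<close>, hence coincide; call
  this point x.  Then \<open>exp(-Z1) x \<in> closure(A z)\<close> and its translate by \<open>Z1 + Z2\<close> is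
  \<open>exp(Z2) x \<in> closure(A y)\<close>.\<close>

lemma simN_trans:
  assumes Delta_def: "\<Delta> = {\<mu>. \<forall>j. \<mu> \<bullet> X j \<ge> lam j}" and Q: "quasilattice Q"
    and zw: "simN \<Delta> X lam Q z w" and wy: "simN \<Delta> X lam Q w y"
  shows "simN \<Delta> X lam Q z y"
proof -
  let ?U = "CdDelta \<Delta> X lam"
  obtain Z1 u1 where Z1: "piX X Z1 \<in> Q" and u1: "u1 \<in> closure (A_orbit X z)"
    and v1: "torus_act Z1 u1 \<in> closure (A_orbit X w)" "torus_act Z1 u1 \<in> ?U"
    using zw unfolding simN_iff by blast
  obtain Z2 u2 where Z2: "piX X Z2 \<in> Q" and u2: "u2 \<in> closure (A_orbit X w)" "u2 \<in> ?U"
    and v2: "torus_act Z2 u2 \<in> closure (A_orbit X y)"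
    using wy unfolding simN_iff by blast
  obtain x where x1: "x \<in> closure (A_orbit X (torus_act Z1 u1))" and bx: "balanced X lam x"
    using exists_balanced[OF Delta_def v1(2)] by blast
  obtain x2 where x2: "x2 \<in> closure (A_orbit X u2)" and bx2: "balanced X lam x2"
    using exists_balanced[OF Delta_def u2(2)] by blast
  have "x \<in> closure (A_orbit X w)" using closure_A_orbit_mono[OF v1(1)] x1 by blast
  moreover have "x2 \<in> closure (A_orbit X w)" using closure_A_orbit_mono[OF u2(1)] x2 by blast
  ultimately have "x = x2" by (rule balanced_unique[OF _ _ bx bx2])
  have x_U: "x \<in> ?U" using balanced_CdDelta[OF Delta_def bx] .
  have "torus_act (- Z1) x \<in> closure (A_orbit X u1)"
    using torus_closure_A_orbit[of "- Z1" X "torus_act Z1 u1"] x1 by (auto simp: torus_act_inverse)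
  then have pulled_back: "torus_act (- Z1) x \<in> closure (A_orbit X z)"
    using closure_A_orbit_mono[OF u1] by blast
  have "torus_act Z2 x \<in> closure (A_orbit X y)"
    using torus_closure_A_orbit[of Z2 X u2] x2 closure_A_orbit_mono[OF v2] \<open>x = x2\<close> by blast
  then have pushed_forward: "torus_act (Z1 + Z2) (torus_act (- Z1) x) \<in> closure (A_orbit X y)"
    by (simp add: add.commute[of Z1] torus_act_add torus_act_inverse)
  show ?thesis unfolding simN_iff
    using pulled_back pushed_forward torus_CdDelta[OF x_U] torus_CdDelta[OF torus_CdDelta[OF x_U]]
      quasilattice_add[OF Q Z1 Z2]
    by (intro exI[of _ "Z1 + Z2"] exI[of _ "torus_act (- Z1) x"]) (simp add: piX_add)
qed

text \<open>The theorem: only the description of Delta by the inequalities and the quasilattice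
  property of Q are needed.\<close>

theorem mainTheorem4:
  fixes \<Delta> :: "'a::euclidean_space set"
    and X :: "'d::finite \<Rightarrow> 'a"
    and lam :: "'d \<Rightarrow> real"
    and Q :: "'a set"
  assumes Delta_def: "\<Delta> = {\<mu>. \<forall>j. \<mu> \<bullet> X j \<ge> lam j}"
    and poly: "polytope \<Delta>"
    and full_dim: "aff_dim \<Delta> = int DIM('a)"
    and facets: "\<And>j. {\<mu>\<in>\<Delta>. \<mu> \<bullet> X j = lam j} facet_of \<Delta>"
    and facets_distinct: "inj (\<lambda>j. {\<mu>\<in>\<Delta>. \<mu> \<bullet> X j = lam j})"
    and all_facets: "\<And>F. F facet_of \<Delta> \<Longrightarrow> \<exists>j. F = {\<mu>\<in>\<Delta>. \<mu> \<bullet> X j = lam j}"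
    and Q: "quasilattice Q"
    and XQ: "\<And>j. X j \<in> Q"
  shows "equiv (CdDelta \<Delta> X lam)
           {(z, w). z \<in> CdDelta \<Delta> X lam \<and> w \<in> CdDelta \<Delta> X lam \<and> simN \<Delta> X lam Q z w}"
proof (rule equivI)
  let ?R = "{(z, w). z \<in> CdDelta \<Delta> X lam \<and> w \<in> CdDelta \<Delta> X lam \<and> simN \<Delta> X lam Q z w}"
  show "refl_on (CdDelta \<Delta> X lam) ?R"
    by (rule refl_onI) (auto simp: simN_refl[OF Q])
  show "sym ?R"
    by (rule symI) (auto simp: simN_sym[OF Q])
  show "trans ?R"
    by (rule transI) (auto intro: simN_trans[OF Delta_def Q])
qed auto

end
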